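(* Let $k\ge 1$ and assume that the block residuals $R_0,\dots,R_{k-1}$ produced by the BCG algorithm all have full column rank, so that all quantities up to $X_k,R_k$ are well defined. Then $$\mathfrak{E}_{k-1}=\Theta_{k-1}+\mathfrak{E}_{k},$$ and the matrix $\Theta_{k-1}=(R_{k-1}^TR_{k-1})\Upsilon_{k-1}$ is symmetric and positive definite. In particular, for each $i=1,\dots,m$, $$\|x^{(i)}-x^{(i)}_{k-1}\|_A^2=(\Theta_{k-1})_{i,i}+\|x^{(i)}-x^{(i)}_{k}\|_A^2\ \ge\ (\Theta_{k-1})_{i,i}>0,$$ where $x^{(i)}$ and $x^{(i)}_j$ denote the $i$th columns of $X$ and $X_j$.
   Context: Let $A\in\mathbb{R}^{n\times n}$ be symmetric positive definite, let $B,X_0\in\mathbb{R}^{n\times m}$, and let $X=A^{-1}B$. The block conjugate gradient (BCG) algorithm sets $R_0=B-AX_0$, $P_0=R_0$, and for $k=1,2,\dots$: $\Upsilon_{k-1}=(P_{k-1}^TAP_{k-1})^{-1}(R_{k-1}^TR_{k-1})$, $X_k=X_{k-1}+P_{k-1}\Upsilon_{k-1}$, $R_k=R_{k-1}-AP_{k-1}\Upsilon_{k-1}$, $\Xi_k=(R_{k-1}^TR_{k-1})^{-1}(R_k^TR_k)$, $P_k=R_k+P_{k-1}\Xi_k$. Define $\mathfrak{E}_k=(X-X_k)^TA(X-X_k)$ and $\Theta_k=(R_k^TR_k)\Upsilon_k$. For a vector $y$, $\|y\|_A=(y^TAy)^{1/2}$. *)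

theory Defs
  imports "HOL-Analysis.Analysis"
begin

fun bcg :: "real^'n^'n \<Rightarrow> real^'m^'n \<Rightarrow> real^'m^'n \<Rightarrow> nat
            \<Rightarrow> (real^'m^'n) \<times> (real^'m^'n) \<times> (real^'m^'n)" where
  "bcg A B X0 0 = (X0, B - A ** X0, B - A ** X0)"
| "bcg A B X0 (Suc k) =
     (let (X, R, P) = bcg A B X0 k;
          Ups = matrix_inv (transpose P ** A ** P) ** (transpose R ** R);
          X' = X + P ** Ups;
          R' = R - (A ** P) ** Ups;
          Xi = matrix_inv (transpose R ** R) ** (transpose R' ** R');
          P' = R' + P ** Xi
      in (X', R', P'))"

definition bcg_X where "bcg_X A B X0 k = fst (bcg A B X0 k)"
definition bcg_R where "bcg_R A B X0 k = fst (snd (bcg A B X0 k))"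
definition bcg_P where "bcg_P A B X0 k = snd (snd (bcg A B X0 k))"

definition bcg_Ups :: "real^'n^'n \<Rightarrow> real^'m^'n \<Rightarrow> real^'m^'n \<Rightarrow> nat \<Rightarrow> real^'m^'m" where
  "bcg_Ups A B X0 k =
     matrix_inv (transpose (bcg_P A B X0 k) ** A ** bcg_P A B X0 k)
       ** (transpose (bcg_R A B X0 k) ** bcg_R A B X0 k)"

definition bcg_Theta :: "real^'n^'n \<Rightarrow> real^'m^'n \<Rightarrow> real^'m^'n \<Rightarrow> nat \<Rightarrow> real^'m^'m" where
  "bcg_Theta A B X0 k = (transpose (bcg_R A B X0 k) ** bcg_R A B X0 k) ** bcg_Ups A B X0 k"

definition bcg_E :: "real^'n^'n \<Rightarrow> real^'m^'n \<Rightarrow> real^'m^'n \<Rightarrow> nat \<Rightarrow> real^'m^'m" where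
  "bcg_E A B X0 k =
     transpose (matrix_inv A ** B - bcg_X A B X0 k) ** A ** (matrix_inv A ** B - bcg_X A B X0 k)"

definition sym_posdef :: "real^'a^'a \<Rightarrow> bool" where
  "sym_posdef M \<longleftrightarrow> transpose M = M \<and> (\<forall>x. x \<noteq> 0 \<longrightarrow> x \<bullet> (M *v x) > 0)"

definition A_norm :: "real^'n^'n \<Rightarrow> real^'n \<Rightarrow> real" where
  "A_norm A y = sqrt (y \<bullet> (A *v y))"

end

theory Submission imports Defs begin

text \<open>Write \<open>G = R\<^sub>j\<^sup>T R\<^sub>j\<close> and \<open>M = P\<^sub>j\<^sup>T A P\<^sub>j\<close>. By induction, the search
  directions satisfy \<open>P\<^sub>j\<^sup>T R\<^sub>j = G\<close>; together with full rank of \<open>R\<^sub>j\<close> this makes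
  \<open>P\<^sub>j\<close> injective, hence \<open>M\<close> positive definite, and the step \<open>\<Upsilon>\<^sub>j = M\<inverse> G\<close> is a
  Galerkin projection: \<open>P\<^sub>j\<^sup>T R\<^sub>j\<^sub>+\<^sub>1 = 0\<close>. Since \<open>R\<^sub>j\<^sub>+\<^sub>1 = A (X - X\<^sub>j\<^sub>+\<^sub>1)\<close> and
  \<open>X - X\<^sub>j = (X - X\<^sub>j\<^sub>+\<^sub>1) + P\<^sub>j \<Upsilon>\<^sub>j\<close>, the cross terms of the energy vanish and
  \<open>\<EE>\<^sub>j = \<EE>\<^sub>j\<^sub>+\<^sub>1 + \<Upsilon>\<^sub>j\<^sup>T M \<Upsilon>\<^sub>j\<close>, where \<open>\<Upsilon>\<^sub>j\<^sup>T M \<Upsilon>\<^sub>j = G M\<inverse> G = \<Theta>\<^sub>j\<close> is positive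
  definite. The column statements are the diagonal entries of this identity.\<close>

lemma transpose_add: "transpose (A + B) = transpose A + transpose (B::'a::semiring_1^'c^'b)"
  by (simp add: transpose_def vec_eq_iff)

lemma transpose_zero [simp]: "transpose (0::'a::semiring_1^'c^'b) = 0"
  by (simp add: transpose_def vec_eq_iff)

lemma matrix_add_rdistrib: "(A + B) ** C = A ** C + B ** (C::'a::semiring_1^'c^'b)"
  by (simp add: matrix_matrix_mult_def vec_eq_iff sum.distrib algebra_simps)

lemma matrix_diff_ldistrib: "A ** (B - C) = A ** B - A ** (C::'a::ring_1^'c^'b)"
  by (simp add: matrix_matrix_mult_def vec_eq_iff sum_subtractf algebra_simps)

lemma inner_transpose_matrix_vector: "x \<bullet> (transpose (Y::real^'a^'b) *v z) = (Y *v x) \<bullet> z"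
  by (metis dot_lmul_matrix inner_commute transpose_matrix_vector)

lemma inner_congruence_matrix_vector:
  "x \<bullet> ((transpose P ** A ** P) *v x) = (P *v x) \<bullet> (A *v (P *v (x::real^'a)))"
  by (metis inner_transpose_matrix_vector matrix_vector_mul_assoc)

lemma matrix_entry_inner_axis: "(M::real^'a^'b) $ i $ j = axis i 1 \<bullet> (M *v axis j 1)"
  by (metis cart_eq_inner_axis column_def inner_commute matrix_vector_mult_basis vec_lambda_beta)

lemma congruence_diagonal:
  "(transpose (Y::real^'m^'n) ** A ** Y) $ i $ i = column i Y \<bullet> (A *v column i Y)"
proof -
  have "(transpose Y ** A ** Y) $ i $ i = axis i 1 \<bullet> ((transpose Y ** A ** Y) *v axis i 1)"
    by (rule matrix_entry_inner_axis)
  thus ?thesis unfolding inner_congruence_matrix_vector by (simp only: matrix_vector_mult_basis)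
qed

lemma invertible_matrix_inv_mult:
  assumes "invertible (M::real^'a^'a)"
  shows "M ** matrix_inv M = mat 1" "matrix_inv M ** M = mat 1"
proof -
  have "\<exists>M'. M ** M' = mat 1 \<and> M' ** M = mat 1" using assms invertible_def by blast
  hence "M ** matrix_inv M = mat 1 \<and> matrix_inv M ** M = mat 1"
    unfolding matrix_inv_def by (rule someI_ex)
  thus "M ** matrix_inv M = mat 1" "matrix_inv M ** M = mat 1" by auto
qed

lemma sym_posdef_transpose: "sym_posdef M \<Longrightarrow> transpose M = M"
  by (simp add: sym_posdef_def)

lemma sym_posdef_kernel: "sym_posdef M \<Longrightarrow> M *v x = 0 \<Longrightarrow> x = 0"
  unfolding sym_posdef_def by (metis inner_zero_right less_irrefl)

lemma sym_posdef_nonneg: "sym_posdef A \<Longrightarrow> 0 \<le> y \<bullet> (A *v y)"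
  unfolding sym_posdef_def by (metis inner_zero_left order.strict_implies_order order.refl)

lemma sym_posdef_diagonal_pos: "sym_posdef (M::real^'a^'a) \<Longrightarrow> M $ i $ i > 0"
  unfolding sym_posdef_def matrix_entry_inner_axis by simp

lemma sym_posdef_invertible: "sym_posdef (M::real^'a^'a) \<Longrightarrow> invertible M"
  using sym_posdef_kernel matrix_left_invertible_ker invertible_left_inverse by blast

lemma A_norm_square: "sym_posdef A \<Longrightarrow> (A_norm A y)\<^sup>2 = y \<bullet> (A *v y)"
  by (simp add: A_norm_def sym_posdef_nonneg)

lemma sym_posdef_congruence:
  assumes "sym_posdef (A::real^'n^'n)" and "\<And>x. P *v x = 0 \<Longrightarrow> x = 0"
  shows "sym_posdef (transpose (P::real^'m^'n) ** A ** P)"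
  unfolding sym_posdef_def
proof (intro conjI allI impI)
  show "transpose (transpose P ** A ** P) = transpose P ** A ** P"
    by (simp add: matrix_transpose_mul matrix_mul_assoc sym_posdef_transpose[OF assms(1)])
next
  fix x :: "real^'m" assume "x \<noteq> 0"
  hence "P *v x \<noteq> 0" using assms(2) by blast
  thus "0 < x \<bullet> ((transpose P ** A ** P) *v x)"
    unfolding inner_congruence_matrix_vector using assms(1) sym_posdef_def by blast
qed

lemma sym_posdef_gram:
  assumes "rank (R::real^'m^'n) = CARD('m)"
  shows "sym_posdef (transpose R ** R)"
proof -
  have "R *v x = 0 \<Longrightarrow> x = 0" for x
    using assms full_rank_injective by (metis inj_eq matrix_vector_mult_0_right)
  hence "sym_posdef (transpose R ** mat 1 ** R)"
    by (intro sym_posdef_congruence) (auto simp: sym_posdef_def)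
  thus ?thesis by simp
qed

lemma sym_posdef_matrix_inv:
  assumes "sym_posdef (M::real^'a^'a)"
  shows "sym_posdef (matrix_inv M)"
proof -
  note inv = invertible_matrix_inv_mult[OF sym_posdef_invertible[OF assms]]
  have "transpose (matrix_inv M) = transpose (matrix_inv M) ** (M ** matrix_inv M)"
    using inv by simp
  also have "\<dots> = transpose (M ** matrix_inv M) ** matrix_inv M"
    by (simp add: matrix_transpose_mul matrix_mul_assoc sym_posdef_transpose[OF assms])
  also have "\<dots> = matrix_inv M" using inv by simp
  finally have symmetric: "transpose (matrix_inv M) = matrix_inv M" .
  have "(matrix_inv M *v y) \<bullet> (M *v (matrix_inv M *v y)) = y \<bullet> (matrix_inv M *v y)" for y
    using inv by (simp add: matrix_vector_mul_assoc inner_commute)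
  with assms have "y \<noteq> 0 \<Longrightarrow> y \<bullet> (matrix_inv M *v y) > 0" for y
    unfolding sym_posdef_def
    by (metis inv(1) matrix_vector_mul_assoc matrix_vector_mul_lid matrix_vector_mult_0_right)
  with symmetric show ?thesis by (simp add: sym_posdef_def)
qed

lemma sym_posdef_sandwich:
  assumes "sym_posdef (G::real^'a^'a)" and "sym_posdef N"
  shows "sym_posdef (G ** N ** G)"
proof -
  have "sym_posdef (transpose G ** N ** G)"
    by (rule sym_posdef_congruence[OF assms(2)]) (rule sym_posdef_kernel[OF assms(1)])
  thus ?thesis
    by (simp add: sym_posdef_transpose[OF assms(1)])
qed

lemma inverse_congruence_sandwich:
  fixes M G :: "real^'a^'a"
  assumes "sym_posdef M" and "transpose G = G"
  shows "transpose (matrix_inv M ** G) ** M ** (matrix_inv M ** G) = G ** matrix_inv M ** G"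
proof -
  have "transpose (matrix_inv M ** G) ** M ** (matrix_inv M ** G)
      = G ** transpose (matrix_inv M) ** (M ** matrix_inv M) ** G"
    by (simp add: matrix_transpose_mul assms(2) matrix_mul_assoc)
  also have "\<dots> = G ** matrix_inv M ** G"
    by (simp add: sym_posdef_transpose[OF sym_posdef_matrix_inv[OF assms(1)]]
      invertible_matrix_inv_mult(1)[OF sym_posdef_invertible[OF assms(1)]])
  finally show ?thesis .
qed

lemma injective_if_gram:
  fixes P R :: "real^'m^'n"
  assumes "rank R = CARD('m)" and "transpose P ** R = transpose R ** R" and "P *v x = 0"
  shows "x = 0"
proof -
  have "transpose R ** P = transpose R ** R"
    using assms(2) by (metis matrix_transpose_mul transpose_transpose)
  hence "(transpose R ** R) *v x = 0"
    using assms(3) by (metis matrix_vector_mul_assoc matrix_vector_mult_0_right)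
  thus "x = 0" using sym_posdef_kernel[OF sym_posdef_gram[OF assms(1)]] by blast
qed

lemma galerkin_orthogonal:
  fixes A :: "real^'n^'n" and P R :: "real^'m^'n"
  assumes "invertible (transpose P ** A ** P)" and "transpose P ** R = G"
  shows "transpose P ** (R - (A ** P) ** (matrix_inv (transpose P ** A ** P) ** G)) = 0"
proof -
  have "transpose P ** (R - (A ** P) ** (matrix_inv (transpose P ** A ** P) ** G))
      = G - ((transpose P ** A ** P) ** matrix_inv (transpose P ** A ** P)) ** G"
    by (simp add: matrix_diff_ldistrib assms(2) matrix_mul_assoc)
  thus ?thesis by (simp add: invertible_matrix_inv_mult(1)[OF assms(1)])
qed

lemma energy_split:
  fixes A :: "real^'n^'n" and P :: "real^'m^'n" and Y :: "real^'k^'n" and U :: "real^'k^'m"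
  assumes "transpose A = A" and "transpose P ** (A ** Y) = 0"
  shows "transpose (Y + P ** U) ** A ** (Y + P ** U)
       = transpose Y ** A ** Y + transpose U ** (transpose P ** A ** P) ** U"
proof -
  have "transpose Y ** A ** P = 0"
    using assms by (metis matrix_mul_assoc matrix_transpose_mul transpose_transpose transpose_zero)
  moreover have "transpose (P ** U) ** A ** Y = 0"
    using assms(2) by (simp add: matrix_transpose_mul flip: matrix_mul_assoc)
  ultimately show ?thesis
    by (simp add: transpose_add matrix_add_rdistrib matrix_add_ldistrib matrix_transpose_mul
        matrix_mul_assoc)
qed

lemma bcg_Suc:
  "bcg_X A B X0 (Suc j) = bcg_X A B X0 j + bcg_P A B X0 j ** bcg_Ups A B X0 j"
  "bcg_R A B X0 (Suc j) = bcg_R A B X0 j - (A ** bcg_P A B X0 j) ** bcg_Ups A B X0 j"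
  "\<exists>Xi. bcg_P A B X0 (Suc j) = bcg_R A B X0 (Suc j) + bcg_P A B X0 j ** Xi"
  by (auto simp: bcg_X_def bcg_R_def bcg_P_def bcg_Ups_def Let_def split: prod.split)

lemma bcg_R_residual: "bcg_R A B X0 j = B - A ** bcg_X A B X0 j"
proof (induction j)
  case 0
  show ?case by (simp add: bcg_X_def bcg_R_def)
next
  case (Suc j)
  show ?case unfolding bcg_Suc Suc matrix_add_ldistrib by (simp add: matrix_mul_assoc)
qed

lemma bcg_R_Suc_orthogonal:
  assumes "sym_posdef A" and "rank (bcg_R A B X0 j) = CARD('m)"
    and "transpose (bcg_P A B X0 j) ** bcg_R A B X0 j
         = transpose (bcg_R A B X0 j) ** (bcg_R A B X0 j :: real^'m^'n)"
  shows "transpose (bcg_P A B X0 j) ** bcg_R A B X0 (Suc j) = 0"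
proof -
  have "sym_posdef (transpose (bcg_P A B X0 j) ** A ** bcg_P A B X0 j)"
    using sym_posdef_congruence[OF assms(1) injective_if_gram[OF assms(2,3)]] .
  from galerkin_orthogonal[OF sym_posdef_invertible[OF this] assms(3)] show ?thesis
    by (simp add: bcg_Suc(2) bcg_Ups_def)
qed

lemma bcg_search_gram:
  assumes "sym_posdef A" and "\<forall>i<j. rank (bcg_R A B X0 i) = CARD('m)"
  shows "transpose (bcg_P A B X0 j) ** bcg_R A B X0 j
         = transpose (bcg_R A B X0 j) ** (bcg_R A B X0 j :: real^'m^'n)"
  using assms(2)
proof (induction j)
  case 0
  show ?case by (simp add: bcg_P_def bcg_R_def)
next
  case (Suc j)
  have "transpose (bcg_P A B X0 j) ** bcg_R A B X0 (Suc j) = 0"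
    using Suc by (intro bcg_R_Suc_orthogonal[OF assms(1)]) auto
  moreover obtain Xi where "bcg_P A B X0 (Suc j) = bcg_R A B X0 (Suc j) + bcg_P A B X0 j ** Xi"
    using bcg_Suc(3) by blast
  ultimately show ?case
    by (simp add: transpose_add matrix_add_rdistrib matrix_transpose_mul flip: matrix_mul_assoc)
qed

lemma bcg_search_matrix_sym_posdef:
  assumes "sym_posdef A" and "\<forall>i\<le>j. rank (bcg_R A B X0 i) = CARD('m)"
  shows "sym_posdef (transpose (bcg_P A B X0 j) ** A ** (bcg_P A B X0 j :: real^'m^'n))"
proof -
  have "\<forall>i<j. rank (bcg_R A B X0 i) = CARD('m)" using assms(2) less_imp_le by blast
  note gram = bcg_search_gram[OF assms(1) this]
  have "rank (bcg_R A B X0 j) = CARD('m)" using assms(2) by blast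
  from sym_posdef_congruence[OF assms(1) injective_if_gram[OF this gram]] show ?thesis .
qed

lemma bcg_Theta_sym_posdef:
  assumes "sym_posdef A" and "\<forall>i\<le>j. rank (bcg_R A B X0 i) = CARD('m)"
  shows "sym_posdef (bcg_Theta A B X0 j :: real^'m^'m)"
proof -
  have "sym_posdef (transpose (bcg_R A B X0 j) ** bcg_R A B X0 j
      ** matrix_inv (transpose (bcg_P A B X0 j) ** A ** bcg_P A B X0 j)
      ** (transpose (bcg_R A B X0 j) ** bcg_R A B X0 j))"
    using assms(2) sym_posdef_sandwich sym_posdef_gram sym_posdef_matrix_inv
      bcg_search_matrix_sym_posdef[OF assms] by blast
  thus ?thesis by (simp add: bcg_Theta_def bcg_Ups_def matrix_mul_assoc)
qed

lemma bcg_Theta_energy: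
  assumes "sym_posdef A" and "\<forall>i\<le>j. rank (bcg_R A B X0 i) = CARD('m)"
  shows "transpose (bcg_Ups A B X0 j) ** (transpose (bcg_P A B X0 j) ** A ** bcg_P A B X0 j)
           ** bcg_Ups A B X0 j = (bcg_Theta A B X0 j :: real^'m^'m)"
proof -
  have "transpose (transpose (bcg_R A B X0 j) ** bcg_R A B X0 j)
      = transpose (bcg_R A B X0 j) ** bcg_R A B X0 j"
    by (simp add: matrix_transpose_mul)
  from inverse_congruence_sandwich[OF bcg_search_matrix_sym_posdef[OF assms] this] show ?thesis
    by (simp add: bcg_Theta_def bcg_Ups_def matrix_mul_assoc)
qed

lemma bcg_E_Suc:
  assumes "sym_posdef A" and "\<forall>i\<le>j. rank (bcg_R A B X0 i) = CARD('m)"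
  shows "bcg_E A B X0 j = bcg_Theta A B X0 j + (bcg_E A B X0 (Suc j) :: real^'m^'m)"
proof -
  define Y where "Y = matrix_inv A ** B - bcg_X A B X0 (Suc j)"
  have "A ** Y = bcg_R A B X0 (Suc j)"
    by (simp add: Y_def bcg_R_residual matrix_diff_ldistrib matrix_mul_assoc
        invertible_matrix_inv_mult(1)[OF sym_posdef_invertible[OF assms(1)]])
  moreover have "transpose (bcg_P A B X0 j) ** bcg_R A B X0 (Suc j) = 0"
  proof (rule bcg_R_Suc_orthogonal[OF assms(1)])
    show "rank (bcg_R A B X0 j) = CARD('m)" using assms(2) by blast
    show "transpose (bcg_P A B X0 j) ** bcg_R A B X0 j
        = transpose (bcg_R A B X0 j) ** bcg_R A B X0 j"
      using bcg_search_gram[OF assms(1)] assms(2) less_imp_le by blast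
  qed
  ultimately have orthogonal: "transpose (bcg_P A B X0 j) ** (A ** Y) = 0" by simp
  have "matrix_inv A ** B - bcg_X A B X0 j = Y + bcg_P A B X0 j ** bcg_Ups A B X0 j"
    by (simp add: Y_def bcg_Suc(1))
  hence "bcg_E A B X0 j
      = transpose (Y + bcg_P A B X0 j ** bcg_Ups A B X0 j) ** A
        ** (Y + bcg_P A B X0 j ** bcg_Ups A B X0 j)"
    by (simp add: bcg_E_def)
  also have "\<dots> = transpose Y ** A ** Y + transpose (bcg_Ups A B X0 j)
      ** (transpose (bcg_P A B X0 j) ** A ** bcg_P A B X0 j) ** bcg_Ups A B X0 j"
    by (rule energy_split[OF sym_posdef_transpose[OF assms(1)] orthogonal])
  also have "\<dots> = bcg_E A B X0 (Suc j) + bcg_Theta A B X0 j"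
    by (simp only: bcg_Theta_energy[OF assms] bcg_E_def Y_def)
  finally show ?thesis by (metis add.commute)
qed

lemma bcg_E_diagonal:
  assumes "sym_posdef A"
  shows "(A_norm A (column i (matrix_inv A ** B) - column i (bcg_X A B X0 j)))\<^sup>2
       = bcg_E A B X0 j $ i $ i"
proof -
  have "column i (matrix_inv A ** B) - column i (bcg_X A B X0 j)
      = column i (matrix_inv A ** B - bcg_X A B X0 j)"
    by (simp add: column_def vec_eq_iff)
  thus ?thesis by (simp add: A_norm_square[OF assms] bcg_E_def congruence_diagonal)
qed

theorem theorem1:
  fixes A :: "real^'n^'n" and B X0 :: "real^'m^'n" and k :: nat
  assumes "sym_posdef A"
    and "k \<ge> 1"
    and "\<forall>j<k. rank (bcg_R A B X0 j) = CARD('m)"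
  shows "bcg_E A B X0 (k - 1) = bcg_Theta A B X0 (k - 1) + bcg_E A B X0 k
       \<and> sym_posdef (bcg_Theta A B X0 (k - 1))
       \<and> (\<forall>i. (A_norm A (column i (matrix_inv A ** B) - column i (bcg_X A B X0 (k - 1))))\<^sup>2
                 = bcg_Theta A B X0 (k - 1) $ i $ i
                   + (A_norm A (column i (matrix_inv A ** B) - column i (bcg_X A B X0 k)))\<^sup>2
             \<and> bcg_Theta A B X0 (k - 1) $ i $ i
                   + (A_norm A (column i (matrix_inv A ** B) - column i (bcg_X A B X0 k)))\<^sup>2
                 \<ge> bcg_Theta A B X0 (k - 1) $ i $ i
             \<and> bcg_Theta A B X0 (k - 1) $ i $ i > 0)"
proof -
  obtain j where k: "k = Suc j" using assms(2) by (cases k) auto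
  have ranks: "\<forall>i\<le>j. rank (bcg_R A B X0 i) = CARD('m)" using assms(3) k less_Suc_eq_le by blast
  note E_Suc = bcg_E_Suc[OF assms(1) ranks]
  note Theta = bcg_Theta_sym_posdef[OF assms(1) ranks]
  have columns: "(A_norm A (column i (matrix_inv A ** B) - column i (bcg_X A B X0 j)))\<^sup>2
      = bcg_Theta A B X0 j $ i $ i
        + (A_norm A (column i (matrix_inv A ** B) - column i (bcg_X A B X0 (Suc j))))\<^sup>2" for i
    unfolding bcg_E_diagonal[OF assms(1)] E_Suc by simp
  show ?thesis
    unfolding k diff_Suc_1
  proof (intro conjI allI)
    fix i
    show "bcg_Theta A B X0 j $ i $ i
        \<le> bcg_Theta A B X0 j $ i $ i
          + (A_norm A (column i (matrix_inv A ** B) - column i (bcg_X A B X0 (Suc j))))\<^sup>2"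
      by simp
  qed (use E_Suc Theta columns sym_posdef_diagonal_pos[OF Theta] in blast)+
qed

end
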